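(* Let $q\ge 2$, $\mathcal{S}$ an SLP deriving $T$ with $|T|\ge q$, and $\phi$ a fingerprint function that is collision free on the substrings of length $q-1$ of $T$. Let $C$ be the CS-tree constructed by the algorithm (see context) and let $\mathcal{T}$ be the suffix tree of $C$. Then every node $v$ of $\mathcal{T}$ with string depth $sd(v)\ge q$ is a leaf.
   Context: Strings are 0-indexed; $s[i:j]$ is the substring from position $i$ to $j$ inclusive. An SLP is a set of rules $X_1,\dots,X_n$, each $X_i=a$ or $X_i=X_lX_r$ ($l,r<i$); $t_{X_i}$ is the derived string, $|X_i|=|t_{X_i}|$, $T=t_{X_n}$; $occ(X_i)$ is the number of occurrences of $X_i$ in the derivation tree. For $X_i=X_lX_r$ with $|X_i|\ge q$, $r_{X_i}=t_{X_i}[\max(0,|X_l|-q+1):\min(|X_l|+q-2,|X_i|-1)]$. Graph $G$: start empty, nodes keyed by fingerprints. For each rule $X_i=X_lX_r$ with $|X_i|\ge q$ (any order), with $r=r_{X_i}$: create node $\phi(r[0:q-2])$ if absent; for $j=1,\dots,|r|-q+1$, create node $\phi(r[j:j+q-2])$ if absent, create an edge labelled $r[j+q-2]$ with counter $0$ from node $\phi(r[j-1:j+q-3])$ to node $\phi(r[j:j+q-2])$ if none exists in that direction, and add $occ(X_i)$ to its counter. Start node: the node labelled $\phi(T[0:q-2])$. CS-tree $C$: create a path of $q-1$ edges from a root $u_0$ down to $u_{q-1}$, edge $u_{j-1}\to u_j$ labelled $T[j-1]$; $u_{q-1}$ corresponds to the start node. Depth-first traverse $G$ from the start node along directed edges;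 exploring an edge from $x$ (tree node $\tau(x)$) to $y$ with label $c$ and counter $m$: if $y$ is unvisited create $\tau(y)$ as child of $\tau(x)$ via an edge labelled $c$ with counter $m$ (node label copied from $y$) and continue from $y$; otherwise create a new leaf child of $\tau(x)$ via an edge labelled $c$ with counter $m$, labelled with $y$'s label. Suffix tree of $C$: for each node $v$ of $C$ let $w_v$ be the string of edge labels on the path from $v$ up to the root of $C$ (read upward, starting with the edge entering $v$); these are the suffixes represented by $C$. The suffix tree $\mathcal{T}$ is the compact trie (generalized suffix tree) of the strings $w_v\$$, $\$$ a fresh terminal symbol. The string depth $sd(v)$ of a node of $\mathcal{T}$ is the total length of edge labels from the root of $\mathcal{T}$ to $v$. *)

theory Defs
  imports Main "HOL-Library.Sublist"
begin

text \<open>s[i:j] (0-indexed, inclusive).\<close>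
definition substr :: "'a list \<Rightarrow> nat \<Rightarrow> nat \<Rightarrow> 'a list" where
  "substr s i j = take (Suc j - i) (drop i s)"

text \<open>Rule X_i is the (i)-th list entry (0-indexed): either a terminal or X_l X_r.\<close>
datatype 'a slp_rule = Term 'a | NT nat nat

definition wf_slp :: "'a slp_rule list \<Rightarrow> bool" where
  "wf_slp R \<longleftrightarrow> R \<noteq> [] \<and> (\<forall>i < length R. \<forall>l r. R ! i = NT l r \<longrightarrow> l < i \<and> r < i)"

definition derivs :: "'a slp_rule list \<Rightarrow> 'a list list" where
  "derivs R = foldl (\<lambda>acc rl. acc @ [case rl of Term a \<Rightarrow> [a] | NT l r \<Rightarrow> acc ! l @ acc ! r]) [] R"

definition deriv :: "'a slp_rule list \<Rightarrow> nat \<Rightarrow> 'a list" where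
  "deriv R i = derivs R ! i"

definition slp_text :: "'a slp_rule list \<Rightarrow> 'a list" where
  "slp_text R = deriv R (length R - 1)"

text \<open>Entry j of occ_counts is the function i \<mapsto> number of occurrences of X_i in the
  derivation tree of X_j.\<close>
definition occ_counts :: "'a slp_rule list \<Rightarrow> (nat \<Rightarrow> nat) list" where
  "occ_counts R = foldl (\<lambda>acc rl. acc @ [\<lambda>i. (if i = length acc then 1 else 0) +
       (case rl of Term _ \<Rightarrow> 0 | NT l r \<Rightarrow> (acc ! l) i + (acc ! r) i)]) [] R"

definition occ :: "'a slp_rule list \<Rightarrow> nat \<Rightarrow> nat" where
  "occ R i = (occ_counts R ! (length R - 1)) i"

definition rX :: "'a slp_rule list \<Rightarrow> nat \<Rightarrow> nat \<Rightarrow> 'a list" where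
  "rX R q i = (case R ! i of Term _ \<Rightarrow> [] | NT l r \<Rightarrow>
      substr (deriv R i) (Suc (length (deriv R l)) - q)
                         (min (length (deriv R l) + q - 2) (length (deriv R i) - 1)))"

definition qual_rules :: "'a slp_rule list \<Rightarrow> nat \<Rightarrow> nat set" where
  "qual_rules R q = {i. i < length R \<and> (\<exists>l r. R ! i = NT l r) \<and> length (deriv R i) \<ge> q}"

text \<open>A graph: set of nodes (fingerprints) and edges (u,v) \<mapsto> (label, counter);
  at most one edge per direction.\<close>
type_synonym ('a, 'f) graph = "'f set \<times> ('f \<times> 'f \<Rightarrow> ('a \<times> nat) option)"

definition add_edge :: "('f \<Rightarrow> 'f \<Rightarrow> 'a \<Rightarrow> nat \<Rightarrow> ('a,'f) graph \<Rightarrow> ('a,'f) graph)" where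
  "add_edge u v c m G = (let (N, E) = G;
       E1 = (case E (u, v) of None \<Rightarrow> E((u, v) \<mapsto> (c, 0)) | Some _ \<Rightarrow> E);
       E2 = E1((u, v) := map_option (\<lambda>(c', k). (c', k + m)) (E1 (u, v)))
     in (insert v N, E2))"

definition process_rule :: "('a list \<Rightarrow> 'f) \<Rightarrow> nat \<Rightarrow> nat \<Rightarrow> 'a list \<Rightarrow> ('a,'f) graph \<Rightarrow> ('a,'f) graph" where
  "process_rule \<phi> q m r G =
     foldl (\<lambda>H j. add_edge (\<phi> (substr r (j - 1) (j + q - 3))) (\<phi> (substr r j (j + q - 2)))
                            (r ! (j + q - 2)) m H)
           (insert (\<phi> (substr r 0 (q - 2))) (fst G), snd G)
           [1..<length r - q + 2]"

definition build_graph :: "'a slp_rule list \<Rightarrow> nat \<Rightarrow> ('a list \<Rightarrow> 'f) \<Rightarrow> nat list \<Rightarrow> ('a,'f) graph" where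
  "build_graph R q \<phi> ord = foldl (\<lambda>G i. process_rule \<phi> q (occ R i) (rX R q i) G) ({}, Map.empty) ord"

text \<open>Tree nodes are numbered 0,1,..,length C; node 0 is the root u_0 and node k+1 is
  described by entry k = (parent, edge label, counter, node label).\<close>
type_synonym ('a, 'f) cstree = "(nat \<times> 'a \<times> nat option \<times> 'f option) list"

text \<open>The initial path u_0 \<rightarrow> ... \<rightarrow> u_{q-1}; node u_j is number j.\<close>
definition init_path :: "'a list \<Rightarrow> nat \<Rightarrow> ('a list \<Rightarrow> 'f) \<Rightarrow> ('a,'f) cstree" where
  "init_path T q \<phi> = map (\<lambda>j. (j, T ! j, None,
       if j = q - 2 then Some (\<phi> (substr T 0 (q - 2))) else None)) [0..<q - 1]"

text \<open>Depth-first traversal (any order of exploring the out-edges).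
  dfs E x p (V,C) (V',C'): the graph node x (already marked visited) with tree node p=\<tau>(x)
  is explored, turning visited set V and tree C into V' and C'.\<close>
inductive dfs :: "('f \<times> 'f \<Rightarrow> ('a \<times> nat) option) \<Rightarrow> 'f \<Rightarrow> nat \<Rightarrow>
                   'f set \<times> ('a,'f) cstree \<Rightarrow> 'f set \<times> ('a,'f) cstree \<Rightarrow> bool"
  and explore :: "('f \<times> 'f \<Rightarrow> ('a \<times> nat) option) \<Rightarrow> nat \<Rightarrow> ('f \<times> 'a \<times> nat) list \<Rightarrow>
                   'f set \<times> ('a,'f) cstree \<Rightarrow> 'f set \<times> ('a,'f) cstree \<Rightarrow> bool"
  for E where
  dfs_node: "distinct es \<Longrightarrow> set es = {(y, c, m). E (x, y) = Some (c, m)} \<Longrightarrow>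
     explore E p es s s' \<Longrightarrow> dfs E x p s s'"
| explore_nil: "explore E p [] s s"
| explore_new: "y \<notin> V \<Longrightarrow>
     dfs E y (Suc (length C)) (insert y V, C @ [(p, c, Some m, Some y)]) s2 \<Longrightarrow>
     explore E p es s2 s3 \<Longrightarrow> explore E p ((y, c, m) # es) (V, C) s3"
| explore_visited: "y \<in> V \<Longrightarrow>
     explore E p es (V, C @ [(p, c, Some m, Some y)]) s3 \<Longrightarrow> explore E p ((y, c, m) # es) (V, C) s3"

text \<open>The string w_v of edge labels from v up to the root (fuel-bounded; parents have
  smaller numbers).\<close>
fun up_string :: "nat \<Rightarrow> ('a,'f) cstree \<Rightarrow> nat \<Rightarrow> 'a list" where
  "up_string 0 C v = []"
| "up_string (Suc f) C v = (if v = 0 \<or> length C < v then [] else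
      (case C ! (v - 1) of (p, c, _, _) \<Rightarrow> c # up_string f C p))"

definition w_str :: "('a,'f) cstree \<Rightarrow> nat \<Rightarrow> 'a list" where
  "w_str C v = up_string v C v"

text \<open>The strings w_v\$ over the alphabet extended by the terminal None = \$.\<close>
definition suffix_strings :: "('a,'f) cstree \<Rightarrow> 'a option list set" where
  "suffix_strings C = {map Some (w_str C v) @ [None] | v. v \<le> length C}"

text \<open>Nodes of the compact trie of a set S of strings, identified with their path labels:
  the root, the leaves (the strings of S) and the branching nodes.\<close>
definition ctrie_nodes :: "'b list set \<Rightarrow> 'b list set" where
  "ctrie_nodes S = {[]} \<union> S \<union>
     {x. \<exists>a b. a \<noteq> b \<and> (\<exists>s\<in>S. prefix (x @ [a]) s) \<and> (\<exists>s\<in>S. prefix (x @ [b]) s)}"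

definition ctrie_leaf :: "'b list set \<Rightarrow> 'b list \<Rightarrow> bool" where
  "ctrie_leaf S x \<longleftrightarrow> x \<in> ctrie_nodes S \<and> \<not> (\<exists>y \<in> ctrie_nodes S. strict_prefix x y)"

definition sdepth :: "'b list \<Rightarrow> nat" where
  "sdepth x = length x"

end

theory Submission
  imports Defs
begin

text \<open>
  Every edge of G joins the fingerprints of two (q-1)-grams a and tl a @ [c] of T, and
  since the fingerprint is collision free on these grams, the source and the label
  determine the edge.  The depth-first traversal realizes every edge of G by at most one
  edge of C, and by induction along the tree the q-1 labels above a node spell its graph
  node's gram backwards.  Hence the first q symbols of w_v determine the tree edge entering v,
  so distinct nodes v of C with |w_v| \<ge> q have distinct prefixes of length q.  In the
  suffix tree a node of string depth \<ge> q therefore lies on a single root-to-leaf path,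
  cannot branch and, as all strings end with the terminal, is a leaf.
\<close>

subsection \<open>Straight-line programs\<close>

lemma foldl_snoc_length_nth:
  fixes f :: "'b list \<Rightarrow> 'a \<Rightarrow> 'b"
  defines "F xs \<equiv> foldl (\<lambda>acc x. acc @ [f acc x]) [] xs"
  shows "length (F xs) = length xs \<and> (\<forall>j < length xs. F xs ! j = f (take j (F xs)) (xs ! j))"
proof (induction xs rule: rev_induct)
  case Nil
  then show ?case by (simp add: F_def)
next
  case (snoc x xs)
  have "F (xs @ [x]) = F xs @ [f (F xs) x]"
    by (simp add: F_def)
  with snoc show ?case
    by (auto simp: nth_append less_Suc_eq)
qed

lemma nth_derivs: "j < length R \<Longrightarrow> derivs R ! j =
   (case R ! j of Term a \<Rightarrow> [a] | NT l r \<Rightarrow> take j (derivs R) ! l @ take j (derivs R) ! r)"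
  unfolding derivs_def by (rule conjunct2[OF foldl_snoc_length_nth, rule_format])

lemma deriv_NT:
  "wf_slp R \<Longrightarrow> i < length R \<Longrightarrow> R ! i = NT l r \<Longrightarrow> deriv R i = deriv R l @ deriv R r"
  unfolding deriv_def wf_slp_def using nth_derivs[of i R] by auto

lemma deriv_Term: "i < length R \<Longrightarrow> R ! i = Term a \<Longrightarrow> deriv R i = [a]"
  unfolding deriv_def using nth_derivs[of i R] by auto

lemma deriv_not_Nil: "wf_slp R \<Longrightarrow> j < length R \<Longrightarrow> deriv R j \<noteq> []"
proof (induction j rule: less_induct)
  case (less j)
  show ?case
  proof (cases "R ! j")
    case (Term a)
    then show ?thesis using deriv_Term[OF less(3)] by simp
  next
    case (NT l r)
    then have "l < j" using less.prems unfolding wf_slp_def by auto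
    then show ?thesis using less deriv_NT[OF less.prems NT] by auto
  qed
qed

lemma nth_occ_counts:
  assumes "wf_slp R" "j < length R"
  shows "(occ_counts R ! j) i = (if i = j then 1 else 0) +
    (case R ! j of Term _ \<Rightarrow> 0 | NT l r \<Rightarrow> (occ_counts R ! l) i + (occ_counts R ! r) i)"
proof -
  let ?f = "\<lambda>acc rl. \<lambda>i. (if i = length acc then 1 else 0) +
       (case rl of Term _ \<Rightarrow> 0 | NT l r \<Rightarrow> (acc ! l) i + (acc ! r) i)"
  have "length (occ_counts R) = length R \<and>
      (\<forall>j < length R. occ_counts R ! j = ?f (take j (occ_counts R)) (R ! j))"
    unfolding occ_counts_def by (rule foldl_snoc_length_nth)
  then show ?thesis
    using assms unfolding wf_slp_def by (cases "R ! j") (auto simp: min_def)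
qed

lemma occ_counts_pos_sublist:
  "wf_slp R \<Longrightarrow> j < length R \<Longrightarrow> 0 < (occ_counts R ! j) i \<Longrightarrow> sublist (deriv R i) (deriv R j)"
proof (induction j rule: less_induct)
  case (less j)
  show ?case
  proof (cases "i = j \<or> (\<exists>a. R ! j = Term a)")
    case True
    then show ?thesis using nth_occ_counts[OF less.prems(1,2), of i] less.prems(3) by (cases "i = j") auto
  next
    case False
    then obtain l r where NT: "R ! j = NT l r" and "i \<noteq> j"
      by (cases "R ! j") auto
    then have "l < j" "r < j" using less.prems unfolding wf_slp_def by auto
    have split: "deriv R j = deriv R l @ deriv R r" using deriv_NT[OF less.prems(1,2) NT] .
    have "0 < (occ_counts R ! l) i \<or> 0 < (occ_counts R ! r) i"
      using nth_occ_counts[OF less.prems(1,2), of i] less.prems(3) NT \<open>i \<noteq> j\<close> by simp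
    moreover have IH: "sublist (deriv R i) (deriv R k)" if "k < j" "0 < (occ_counts R ! k) i" for k
      using less.IH[OF that(1) less.prems(1) _ that(2)] that(1) less.prems(2) by simp
    ultimately have "sublist (deriv R i) (deriv R l) \<or> sublist (deriv R i) (deriv R r)"
      using \<open>l < j\<close> \<open>r < j\<close> by blast
    then show ?thesis
      unfolding split by (meson sublist_append_leftI sublist_append_rightI sublist_order.order.trans)
  qed
qed

lemma occ_pos_sublist_slp_text:
  assumes "wf_slp R" "0 < occ R i"
  shows "sublist (deriv R i) (slp_text R)"
proof -
  have "length R - 1 < length R" using assms(1) by (simp add: wf_slp_def)
  then show ?thesis
    using occ_counts_pos_sublist[OF assms(1)] assms(2) unfolding occ_def slp_text_def by blast
qed

subsection \<open>The graph G\<close>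

definition grams :: "'a list \<Rightarrow> nat \<Rightarrow> 'a list set" where
  "grams T k = {g. sublist g T \<and> length g = k}"

definition shift_edges :: "'a list \<Rightarrow> nat \<Rightarrow> ('a list \<Rightarrow> 'f) \<Rightarrow> ('f \<times> 'f \<Rightarrow> ('a \<times> nat) option) \<Rightarrow> bool"
  where "shift_edges T k \<phi> E \<longleftrightarrow> (\<forall>u w c m. E (u, w) = Some (c, m) \<longrightarrow>
     (\<exists>a \<in> grams T k. tl a @ [c] \<in> grams T k \<and> u = \<phi> a \<and> w = \<phi> (tl a @ [c])))"

lemma foldl_invariant:
  assumes "P x" "\<And>x y. y \<in> set ys \<Longrightarrow> P x \<Longrightarrow> P (f x y)"
  shows "P (foldl f x ys)"
  using assms by (induction ys arbitrary: x) auto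

lemma add_edge_shift_edges:
  assumes "shift_edges T k \<phi> (snd G)" "a \<in> grams T k" "tl a @ [c] \<in> grams T k"
  shows "shift_edges T k \<phi> (snd (add_edge (\<phi> a) (\<phi> (tl a @ [c])) c m G))"
proof -
  obtain N E where "G = (N, E)" by (cases G)
  then show ?thesis
    using assms unfolding add_edge_def shift_edges_def Let_def by (auto split: option.splits if_splits)
qed

lemma sublist_substr: "sublist (substr r i j) r"
  unfolding substr_def by (meson sublist_drop sublist_take sublist_order.order.trans)

lemma substr_window_shift:
  assumes "2 \<le> q" "1 \<le> j" "j + q - 2 < length r"
  shows "substr r j (j + q - 2) = tl (substr r (j - 1) (j + q - 3)) @ [r ! (j + q - 2)]"
    and "length (substr r (j - 1) (j + q - 3)) = q - 1"
proof -
  have "drop (j - 1) r = r ! (j - 1) # drop j r"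
    using assms Cons_nth_drop_Suc[of "j - 1" r] by simp
  moreover have "Suc (j + q - 3) - (j - 1) = Suc (q - 2)" using assms by arith
  ultimately have prev: "substr r (j - 1) (j + q - 3) = r ! (j - 1) # take (q - 2) (drop j r)"
    unfolding substr_def by simp
  have "Suc (j + q - 2) - j = Suc (q - 2)" using assms by arith
  then have "substr r j (j + q - 2) = take (Suc (q - 2)) (drop j r)"
    unfolding substr_def by simp
  also have "\<dots> = take (q - 2) (drop j r) @ [r ! (j + q - 2)]"
  proof -
    have "q - 2 < length (drop j r)" "drop j r ! (q - 2) = r ! (j + q - 2)"
      using assms by auto
    then show ?thesis by (simp add: take_Suc_conv_app_nth)
  qed
  finally show "substr r j (j + q - 2) = tl (substr r (j - 1) (j + q - 3)) @ [r ! (j + q - 2)]"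
    unfolding prev by simp
  show "length (substr r (j - 1) (j + q - 3)) = q - 1"
    unfolding prev using assms by simp
qed

lemma process_rule_shift_edges:
  fixes \<phi> :: "'a list \<Rightarrow> 'f" and G :: "('a, 'f) graph"
  assumes q: "2 \<le> q" and r: "sublist r T" "q \<le> length r"
    and G: "shift_edges T (q - 1) \<phi> (snd G)"
  shows "shift_edges T (q - 1) \<phi> (snd (process_rule \<phi> q m r G))"
  unfolding process_rule_def
proof (rule foldl_invariant[where P = "\<lambda>H. shift_edges T (q - 1) \<phi> (snd H)"])
  show "shift_edges T (q - 1) \<phi> (snd (insert (\<phi> (substr r 0 (q - 2))) (fst G), snd G))"
    using G by simp
next
  fix H :: "('a, 'f) graph" and j
  assume j: "j \<in> set [1..<length r - q + 2]" and H: "shift_edges T (q - 1) \<phi> (snd H)"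
  have j': "1 \<le> j" "j + q - 2 < length r" using j r q by auto
  let ?a = "substr r (j - 1) (j + q - 3)"
  note window = substr_window_shift[OF q j']
  have "sublist ?a T" "sublist (substr r j (j + q - 2)) T"
    using sublist_substr r(1) by (meson sublist_order.order.trans)+
  then have "?a \<in> grams T (q - 1)" "tl ?a @ [r ! (j + q - 2)] \<in> grams T (q - 1)"
    using window q by (simp_all add: grams_def)
  then show "shift_edges T (q - 1) \<phi> (snd (add_edge (\<phi> ?a) (\<phi> (substr r j (j + q - 2)))
      (r ! (j + q - 2)) m H))"
    unfolding window(1) by (rule add_edge_shift_edges[OF H])
qed

lemma rX_sublist_length:
  assumes q: "2 \<le> q" and wf: "wf_slp R" and i: "i \<in> qual_rules R q" and occ: "0 < occ R i"
  shows "sublist (rX R q i) (slp_text R)" "q \<le> length (rX R q i)"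
proof -
  obtain l r where NT: "R ! i = NT l r" and il: "i < length R" and len: "q \<le> length (deriv R i)"
    using i unfolding qual_rules_def by auto
  have "l < length R" "r < length R" using wf NT il unfolding wf_slp_def by auto
  then have "1 \<le> length (deriv R l)" "1 \<le> length (deriv R r)"
    using deriv_not_Nil[OF wf] by (auto simp: Suc_le_eq)
  moreover have "length (deriv R i) = length (deriv R l) + length (deriv R r)"
    using deriv_NT[OF wf il NT] by simp
  moreover have rX: "rX R q i = substr (deriv R i) (Suc (length (deriv R l)) - q)
      (min (length (deriv R l) + q - 2) (length (deriv R i) - 1))"
    unfolding rX_def NT by simp
  ultimately show "q \<le> length (rX R q i)"
    unfolding rX substr_def using len q by (simp add: min_def) arith
  show "sublist (rX R q i) (slp_text R)"
    unfolding rX using sublist_substr occ_pos_sublist_slp_text[OF wf occ]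
    by (meson sublist_order.order.trans)
qed

lemma build_graph_shift_edges:
  fixes \<phi> :: "'a list \<Rightarrow> 'f"
  assumes q: "2 \<le> q" and wf: "wf_slp R" and occ: "\<forall>i < length R. 0 < occ R i"
    and ord: "set ord = qual_rules R q"
  shows "shift_edges (slp_text R) (q - 1) \<phi> (snd (build_graph R q \<phi> ord))"
  unfolding build_graph_def
proof (rule foldl_invariant[where P = "\<lambda>G. shift_edges (slp_text R) (q - 1) \<phi> (snd G)"])
  show "shift_edges (slp_text R) (q - 1) \<phi> (snd ({}, Map.empty))"
    by (simp add: shift_edges_def)
next
  fix G :: "('a, 'f) graph" and i
  assume "i \<in> set ord" "shift_edges (slp_text R) (q - 1) \<phi> (snd G)"
  moreover have "0 < occ R i" using \<open>i \<in> set ord\<close> ord occ by (auto simp: qual_rules_def)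
  moreover have "i \<in> qual_rules R q" using \<open>i \<in> set ord\<close> ord by simp
  ultimately show "shift_edges (slp_text R) (q - 1) \<phi> (snd (process_rule \<phi> q (occ R i) (rX R q i) G))"
    using process_rule_shift_edges[OF q] rX_sublist_length[OF q wf] by blast
qed

lemma shift_edges_target:
  assumes "shift_edges T k \<phi> E" "inj_on \<phi> (grams T k)" "a \<in> grams T k" "E (\<phi> a, y) = Some (c, m)"
  shows "tl a @ [c] \<in> grams T k" "y = \<phi> (tl a @ [c])"
proof -
  obtain a' where "a' \<in> grams T k" "tl a' @ [c] \<in> grams T k" "\<phi> a = \<phi> a'" "y = \<phi> (tl a' @ [c])"
    using assms(1,4) unfolding shift_edges_def by blast
  moreover have "a = a'" using assms(2,3) calculation inj_onD by metis
  ultimately show "tl a @ [c] \<in> grams T k" "y = \<phi> (tl a @ [c])" by simp_all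
qed

subsection \<open>The depth-first traversal\<close>

definition node_label :: "('a, 'f) cstree \<Rightarrow> nat \<Rightarrow> 'f option" where
  "node_label C v = (if v = 0 \<or> length C < v then None else snd (snd (snd (C ! (v - 1)))))"

text \<open>Entry k of C describes the tree edge entering node k+1.\<close>
definition entry_edge :: "('a, 'f) cstree \<Rightarrow> nat \<Rightarrow> 'f option \<times> 'f option" where
  "entry_edge C k = (node_label C (fst (C ! k)), snd (snd (snd (C ! k))))"

definition realized_edges :: "('a, 'f) cstree \<Rightarrow> nat \<Rightarrow> nat \<Rightarrow> ('f option \<times> 'f option) list" where
  "realized_edges C i j = map (entry_edge C) [i..<j]"

definition entries_follow :: "('f \<times> 'f \<Rightarrow> ('a \<times> nat) option) \<Rightarrow> nat \<Rightarrow> ('a, 'f) cstree \<Rightarrow>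
    nat \<Rightarrow> nat \<Rightarrow> bool" where
  "entries_follow E p C i j \<longleftrightarrow> (\<forall>k. i \<le> k \<and> k < j \<longrightarrow> p \<le> fst (C ! k) \<and> fst (C ! k) \<le> k \<and>
     (\<exists>x c m y. node_label C (fst (C ! k)) = Some x \<and> snd (C ! k) = (c, Some m, Some y) \<and>
        E (x, y) = Some (c, m)))"

lemma node_label_SomeD: "node_label C p = Some x \<Longrightarrow> 0 < p \<and> p \<le> length C"
  unfolding node_label_def by (auto split: if_splits)

lemma node_label_snoc: "node_label (C @ [(p, c, m, y)]) (Suc (length C)) = y"
  unfolding node_label_def by simp

lemma prefix_nth: "prefix xs ys \<Longrightarrow> i < length xs \<Longrightarrow> ys ! i = xs ! i"
  by (auto simp: prefix_def nth_append)

lemma node_label_prefix: "prefix C C' \<Longrightarrow> v \<le> length C \<Longrightarrow> node_label C' v = node_label C v"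
  unfolding node_label_def using prefix_nth prefix_length_le by fastforce

lemma realized_edges_append:
  "i \<le> j \<Longrightarrow> j \<le> l \<Longrightarrow> realized_edges C i l = realized_edges C i j @ realized_edges C j l"
  unfolding realized_edges_def by (metis le_add_diff_inverse map_append upt_add_eq_append)

lemma realized_edges_prefix:
  assumes "prefix C C'" "j \<le> length C" "entries_follow E p C i j"
  shows "realized_edges C' i j = realized_edges C i j"
  using assms prefix_nth[OF assms(1)] node_label_prefix[OF assms(1)]
  unfolding realized_edges_def entry_edge_def entries_follow_def by auto

lemma entries_follow_prefix:
  assumes "prefix C C'" "j \<le> length C" "entries_follow E p C i j"
  shows "entries_follow E p C' i j"
  using assms prefix_nth[OF assms(1)] node_label_prefix[OF assms(1)]
  unfolding entries_follow_def by (smt (verit) le_trans less_imp_le_nat order.strict_trans2)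

lemma entries_follow_append:
  "entries_follow E p C i j \<Longrightarrow> entries_follow E p C j l \<Longrightarrow> entries_follow E p C i l"
  unfolding entries_follow_def by (meson not_le)

lemma entries_follow_mono: "p' \<le> p \<Longrightarrow> entries_follow E p C i j \<Longrightarrow> entries_follow E p' C i j"
  unfolding entries_follow_def using le_trans by blast

text \<open>
  Invariant of the traversal from graph node x, located at tree node p, which turns the visited
  set V and the tree C into V' and C': the appended entries realize pairwise distinct edges of G,
  each leaving x towards Y or leaving a node first visited during the traversal.
\<close>
definition explored :: "('f \<times> 'f \<Rightarrow> ('a \<times> nat) option) \<Rightarrow> 'f \<Rightarrow> nat \<Rightarrow> 'f set \<Rightarrow>
    'f set \<Rightarrow> ('a, 'f) cstree \<Rightarrow> 'f set \<Rightarrow> ('a, 'f) cstree \<Rightarrow> bool" where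
  "explored E x p Y V C V' C' \<longleftrightarrow> V \<subseteq> V' \<and> prefix C C' \<and>
     entries_follow E p C' (length C) (length C') \<and>
     distinct (realized_edges C' (length C) (length C')) \<and>
     (\<forall>(u, w) \<in> set (realized_edges C' (length C) (length C')).
        u = Some x \<and> w \<in> Some ` Y \<or> u \<in> Some ` (V' - V))"

lemma explored_refl: "explored E x p Y V C V C"
  unfolding explored_def realized_edges_def entries_follow_def by auto

lemma explored_mono_targets: "explored E x p Y V C V' C' \<Longrightarrow> Y \<subseteq> Y' \<Longrightarrow> explored E x p Y' V C V' C'"
  unfolding explored_def by blast

lemma explored_Cons:
  assumes rest: "explored E x p Y V (C @ [(p, c, Some m, Some y)]) V' C'"
    and edge: "E (x, y) = Some (c, m)" and "y \<notin> Y" "x \<in> V" and px: "node_label C p = Some x"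
  shows "explored E x p (insert y Y) V C V' C'"
proof -
  define C1 where "C1 = C @ [(p, c, Some m, Some y)]"
  have p: "p \<le> length C" using node_label_SomeD[OF px] by simp
  have pre1: "prefix C1 C'" and follow1: "entries_follow E p C' (length C1) (length C')"
    using rest unfolding explored_def C1_def by auto
  have pre: "prefix C C'" using pre1 unfolding C1_def by (metis prefixI prefix_order.trans)
  have head: "C' ! length C = (p, c, Some m, Some y)"
    using prefix_nth[OF pre1, of "length C"] unfolding C1_def by simp
  have px': "node_label C' p = Some x" using node_label_prefix[OF pre p] px by simp
  have "entries_follow E p C' (length C) (length C1)"
    unfolding entries_follow_def C1_def using head px' edge p by (auto simp: le_less_Suc_eq)
  then have follow: "entries_follow E p C' (length C) (length C')"
    using entries_follow_append follow1 by blast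
  have L: "length C1 \<le> length C'" "length C1 = Suc (length C)"
    using prefix_length_le[OF pre1] unfolding C1_def by simp_all
  have "realized_edges C' (length C) (length C1) = [(Some x, Some y)]"
    unfolding realized_edges_def entry_edge_def using L(2) head px' by simp
  then have "realized_edges C' (length C) (length C') = (Some x, Some y) # realized_edges C' (length C1) (length C')"
    using realized_edges_append[OF _ L(1), of "length C" C'] L(2) by simp
  moreover have "(Some x, Some y) \<notin> set (realized_edges C' (length C1) (length C'))"
    using rest assms(3,4) unfolding explored_def C1_def by fastforce
  ultimately show ?thesis
    using rest follow pre unfolding explored_def C1_def by auto
qed

lemma explored_append:
  assumes inner: "explored E y p' UNIV (insert y V) C1 V2 C2"
    and rest: "explored E x p Y V2 C2 V3 C3"
    and "y \<notin> V" "x \<in> V" "p \<le> p'"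
  shows "explored E x p Y V C1 V3 C3"
proof -
  have pre: "prefix C1 C2" "prefix C2 C3" and L: "length C1 \<le> length C2" "length C2 \<le> length C3"
    and follow2: "entries_follow E p' C2 (length C1) (length C2)"
    using inner rest prefix_length_le unfolding explored_def by auto
  have "entries_follow E p C3 (length C1) (length C2)"
    using entries_follow_mono[OF \<open>p \<le> p'\<close> entries_follow_prefix[OF pre(2) _ follow2]] by simp
  then have follow: "entries_follow E p C3 (length C1) (length C3)"
    using rest entries_follow_append unfolding explored_def by blast
  have split: "realized_edges C3 (length C1) (length C3) =
      realized_edges C2 (length C1) (length C2) @ realized_edges C3 (length C2) (length C3)"
    using realized_edges_append[OF L, of C3] realized_edges_prefix[OF pre(2) _ follow2] by simp
  let ?I = "realized_edges C2 (length C1) (length C2)" and ?R = "realized_edges C3 (length C2) (length C3)"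
  have VV: "V \<subseteq> V2" "V2 \<subseteq> V3" using inner rest unfolding explored_def by auto
  have inner_src: "\<forall>(u, w) \<in> set ?I. u \<in> Some ` (V2 - V)"
    using inner \<open>y \<notin> V\<close> unfolding explored_def by fastforce
  have rest_src: "\<forall>(u, w) \<in> set ?R. u = Some x \<and> w \<in> Some ` Y \<or> u \<in> Some ` (V3 - V2)"
    using rest unfolding explored_def by blast
  have "set ?I \<inter> set ?R = {}"
    using inner_src rest_src \<open>x \<in> V\<close> by fastforce
  then have "distinct (?I @ ?R)" using inner rest unfolding explored_def by simp
  moreover have "\<forall>(u, w) \<in> set (?I @ ?R). u = Some x \<and> w \<in> Some ` Y \<or> u \<in> Some ` (V3 - V)"
    using inner_src rest_src VV by fastforce
  ultimately show ?thesis
    using VV follow prefix_order.trans[OF pre] unfolding explored_def split by simp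
qed

lemma dfs_explored:
  shows "dfs E x p s s' \<Longrightarrow> x \<in> fst s \<Longrightarrow> node_label (snd s) p = Some x \<Longrightarrow>
      explored E x p UNIV (fst s) (snd s) (fst s') (snd s')"
    and "explore E p es s s' \<Longrightarrow> (\<And>x. x \<in> fst s \<Longrightarrow> node_label (snd s) p = Some x \<Longrightarrow>
      (\<forall>(y, c, m) \<in> set es. E (x, y) = Some (c, m)) \<Longrightarrow> distinct (map fst es) \<Longrightarrow>
      explored E x p (fst ` set es) (fst s) (snd s) (fst s') (snd s'))"
proof (induction rule: dfs_explore.inducts)
  case (dfs_node es x p s s')
  have es: "distinct es" "set es = {(y, c, m). E (x, y) = Some (c, m)}"
    using dfs_node by simp_all
  then have "inj_on fst (set es)" by (auto simp: inj_on_def)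
  then have "distinct (map fst es)" using es(1) by (simp add: distinct_map)
  then show ?case
    using dfs_node explored_mono_targets by (metis (no_types, lifting) case_prodI2 mem_Collect_eq subset_UNIV)
next
  case (explore_nil p s)
  then show ?case by (simp add: explored_refl)
next
  case (explore_new y V C p c m s2 es s3)
  define C1 where "C1 = C @ [(p, c, Some m, Some y)]"
  have p: "p \<le> length C" using node_label_SomeD explore_new.prems(2) by force
  have inner: "explored E y (Suc (length C)) UNIV (insert y V) C1 (fst s2) (snd s2)"
    using explore_new.IH(2) node_label_snoc unfolding C1_def by fastforce
  then have "x \<in> fst s2" "node_label (snd s2) p = Some x"
    using explore_new.prems(1,2) node_label_prefix[of C1 "snd s2" p] node_label_prefix[of C C1 p] p
    unfolding explored_def C1_def by auto
  then have "explored E x p (fst ` set es) (fst s2) (snd s2) (fst s3) (snd s3)"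
    using explore_new.IH(4) explore_new.prems(3,4) by simp
  then have "explored E x p (fst ` set es) V C1 (fst s3) (snd s3)"
    using explored_append[OF inner] explore_new.hyps(1) explore_new.prems(1) p by simp
  then show ?case
    using explored_Cons explore_new.prems unfolding C1_def by fastforce
next
  case (explore_visited y V p es C c m s3)
  have p: "p \<le> length C" using node_label_SomeD explore_visited.prems(2) by force
  have "node_label (C @ [(p, c, Some m, Some y)]) p = Some x"
    using node_label_prefix[of C "C @ [(p, c, Some m, Some y)]" p] p explore_visited.prems(2) by simp
  then have "explored E x p (fst ` set es) V (C @ [(p, c, Some m, Some y)]) (fst s3) (snd s3)"
    using explore_visited.IH explore_visited.prems(1,3,4) by simp
  then show ?case
    using explored_Cons explore_visited.prems by fastforce
qed

definition parents_precede :: "('a, 'f) cstree \<Rightarrow> bool" where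
  "parents_precede C \<longleftrightarrow> (\<forall>k < length C. fst (C ! k) \<le> k)"

lemma up_string_fuel:
  "parents_precede C \<Longrightarrow> v \<le> f \<Longrightarrow> v \<le> g \<Longrightarrow> up_string f C v = up_string g C v"
proof (induction f arbitrary: g v)
  case 0
  then show ?case by (cases g) auto
next
  case (Suc f)
  show ?case
  proof (cases "v = 0 \<or> length C < v")
    case True
    then show ?thesis by (cases g) auto
  next
    case False
    then obtain g' where g: "g = Suc g'" using Suc.prems by (cases g) auto
    have "v - 1 < length C" using False by linarith
    then have "fst (C ! (v - 1)) \<le> v - 1"
      using Suc.prems(1) unfolding parents_precede_def by blast
    then have "fst (C ! (v - 1)) \<le> f" "fst (C ! (v - 1)) \<le> g'"
      using Suc.prems(2,3) g by linarith+
    then have "up_string f C (fst (C ! (v - 1))) = up_string g' C (fst (C ! (v - 1)))"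
      using Suc.IH[OF Suc.prems(1)] by blast
    then show ?thesis
      using False g by (simp add: case_prod_beta)
  qed
qed

lemma length_up_string: "length (up_string f C v) \<le> f"
  by (induction f arbitrary: v) (auto simp: case_prod_beta)

lemma length_w_str: "length (w_str C v) \<le> v"
  unfolding w_str_def by (rule length_up_string)

lemma w_str_Suc:
  assumes "parents_precede C" "k < length C"
  shows "w_str C (Suc k) = fst (snd (C ! k)) # w_str C (fst (C ! k))"
proof -
  have "fst (C ! k) \<le> k" using assms unfolding parents_precede_def by blast
  then have "up_string k C (fst (C ! k)) = w_str C (fst (C ! k))"
    unfolding w_str_def using up_string_fuel[OF assms(1)] by blast
  then show ?thesis
    using assms(2) unfolding w_str_def by (simp add: case_prod_beta)
qed

text \<open>Here n = q - 1 and node n is u_{q-1}, where the traversal starts.\<close>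
locale cs_tree =
  fixes T :: "'a list" and n :: nat and \<phi> :: "'a list \<Rightarrow> 'f"
    and E :: "'f \<times> 'f \<Rightarrow> ('a \<times> nat) option" and C :: "('a, 'f) cstree" and g0 :: "'a list"
  assumes shift: "shift_edges T n \<phi> E" and inj: "inj_on \<phi> (grams T n)"
    and parents: "parents_precede C"
    and follow: "entries_follow E n C n (length C)"
    and distinct_edges: "distinct (realized_edges C n (length C))"
    and root: "n \<le> length C" "g0 \<in> grams T n" "node_label C n = Some (\<phi> g0)"
      "take n (w_str C n) = rev g0"
begin

lemma entry_shift:
  assumes "n \<le> k" "k < length C" "node_label C (fst (C ! k)) = Some (\<phi> a)" "a \<in> grams T n"
  obtains c where "tl a @ [c] \<in> grams T n" "entry_edge C k = (Some (\<phi> a), Some (\<phi> (tl a @ [c])))"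
    "node_label C (Suc k) = Some (\<phi> (tl a @ [c]))" "w_str C (Suc k) = c # w_str C (fst (C ! k))"
proof -
  obtain x c m y where "node_label C (fst (C ! k)) = Some x" "snd (C ! k) = (c, Some m, Some y)"
    "E (x, y) = Some (c, m)"
    using follow assms(1,2) unfolding entries_follow_def by blast
  with assms shift_edges_target[OF shift inj] w_str_Suc[OF parents] show ?thesis
    by (intro that[of c]) (auto simp: entry_edge_def node_label_def)
qed

lemma node_gram:
  "n \<le> v \<Longrightarrow> v \<le> length C \<Longrightarrow> \<exists>g \<in> grams T n. node_label C v = Some (\<phi> g) \<and> take n (w_str C v) = rev g"
proof (induction v rule: less_induct)
  case (less v)
  show ?case
  proof (cases "v = n")
    case True
    then show ?thesis using root by blast
  next
    case False
    then obtain k where k: "v = Suc k" "n \<le> k" "k < length C"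
      using less.prems by (cases v) auto
    let ?p = "fst (C ! k)"
    have "n \<le> ?p" "?p < v" using follow k unfolding entries_follow_def by auto
    then obtain a where a: "a \<in> grams T n" "node_label C ?p = Some (\<phi> a)" "take n (w_str C ?p) = rev a"
      using less k by fastforce
    obtain c where c: "tl a @ [c] \<in> grams T n" "node_label C v = Some (\<phi> (tl a @ [c]))"
      "w_str C v = c # w_str C ?p"
      using entry_shift[OF k(2,3) a(2,1)] k(1) by metis
    have la: "length a = n" "0 < n" using a(1) c(1) by (auto simp: grams_def)
    have "take (n - 1) (w_str C ?p) = take (n - 1) (rev a)"
      using a(3) by (metis diff_le_self min.absorb1 take_take)
    also have "\<dots> = rev (tl a)"
      using la by (simp add: take_rev drop_Suc)
    finally have "take n (w_str C v) = rev (tl a @ [c])"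
      using c(3) la(2) by (cases n) auto
    then show ?thesis using c(1,2) by blast
  qed
qed

lemma entry_edge_from_prefix:
  assumes "n \<le> k" "k < length C"
  obtains a c where "take (Suc n) (w_str C (Suc k)) = c # rev a"
    "entry_edge C k = (Some (\<phi> a), Some (\<phi> (tl a @ [c])))"
proof -
  have "n \<le> fst (C ! k)" "fst (C ! k) \<le> length C" using follow assms unfolding entries_follow_def by auto
  then obtain a where a: "a \<in> grams T n" "node_label C (fst (C ! k)) = Some (\<phi> a)"
    "take n (w_str C (fst (C ! k))) = rev a"
    using node_gram by blast
  obtain c where "entry_edge C k = (Some (\<phi> a), Some (\<phi> (tl a @ [c])))"
    "w_str C (Suc k) = c # w_str C (fst (C ! k))"
    using entry_shift[OF assms a(2,1)] by metis
  with a(3) show ?thesis by (intro that) simp_all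
qed

lemma deep_nodes_inj:
  assumes "n < u" "u \<le> length C" "n < v" "v \<le> length C"
    and "take (Suc n) (w_str C u) = take (Suc n) (w_str C v)"
  shows "u = v"
proof -
  obtain ku kv where k: "u = Suc ku" "v = Suc kv" "n \<le> ku" "n \<le> kv" "ku < length C" "kv < length C"
    using assms(1-4) by (cases u; cases v) auto
  obtain a c where a: "take (Suc n) (w_str C u) = c # rev a"
    "entry_edge C ku = (Some (\<phi> a), Some (\<phi> (tl a @ [c])))"
    using entry_edge_from_prefix[OF k(3,5)] k(1) by metis
  obtain a' c' where a': "take (Suc n) (w_str C v) = c' # rev a'"
    "entry_edge C kv = (Some (\<phi> a'), Some (\<phi> (tl a' @ [c'])))"
    using entry_edge_from_prefix[OF k(4,6)] k(2) by metis
  have "entry_edge C ku = entry_edge C kv" using a a' assms(5) by simp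
  moreover have "inj_on (entry_edge C) {n..<length C}"
    using distinct_edges unfolding realized_edges_def by (simp add: distinct_map)
  ultimately show "u = v" using k by (auto dest: inj_onD)
qed

end

lemma substr_0_eq_take: "2 \<le> q \<Longrightarrow> substr T 0 (q - 2) = take (q - 1) T"
  unfolding substr_def by (simp add: Suc_diff_Suc numeral_2_eq_2)

lemma nth_init_path: "j < q - 1 \<Longrightarrow> init_path T q \<phi> ! j =
    (j, T ! j, None, if j = q - 2 then Some (\<phi> (substr T 0 (q - 2))) else None)"
  unfolding init_path_def by simp

lemma node_label_init_path:
  "2 \<le> q \<Longrightarrow> node_label (init_path T q \<phi>) (q - 1) = Some (\<phi> (substr T 0 (q - 2)))"
  unfolding node_label_def using nth_init_path[of "q - 2" q T \<phi>]
  by (simp add: init_path_def Suc_diff_Suc numeral_2_eq_2)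

lemma parents_precede_init_path:
  assumes "prefix (init_path T q \<phi>) C" "entries_follow E p C (q - 1) (length C)"
  shows "parents_precede C"
  unfolding parents_precede_def
proof (intro allI impI)
  fix k assume "k < length C"
  then show "fst (C ! k) \<le> k"
    using assms prefix_nth[OF assms(1), of k] nth_init_path[of k q]
    unfolding entries_follow_def by (cases "k < q - 1") (auto simp: init_path_def)
qed

lemma w_str_init_path:
  assumes "prefix (init_path T q \<phi>) C" "parents_precede C" "j \<le> q - 1" "j \<le> length T"
  shows "w_str C j = rev (take j T)"
  using assms(3,4)
proof (induction j)
  case 0
  then show ?case by (simp add: w_str_def)
next
  case (Suc j)
  have j: "j < q - 1" "j < length (init_path T q \<phi>)" using Suc.prems by (simp_all add: init_path_def)
  have "C ! j = (j, T ! j, None, if j = q - 2 then Some (\<phi> (substr T 0 (q - 2))) else None)"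
    using prefix_nth[OF assms(1) j(2)] nth_init_path[OF j(1), of T \<phi>] by (rule trans)
  moreover have "j < length C" using prefix_length_le[OF assms(1)] j(2) by simp
  ultimately show ?case
    using Suc w_str_Suc[OF assms(2)] by (simp add: take_Suc_conv_app_nth)
qed

lemma cs_tree_init_path:
  assumes q: "2 \<le> q" "q \<le> length T"
    and shift: "shift_edges T (q - 1) \<phi> E" and inj: "inj_on \<phi> (grams T (q - 1))"
    and dfs: "explored E (\<phi> (substr T 0 (q - 2))) (q - 1) UNIV V0 (init_path T q \<phi>) V C"
  shows "cs_tree T (q - 1) \<phi> E C (take (q - 1) T)"
proof -
  have pre: "prefix (init_path T q \<phi>) C" and follow: "entries_follow E (q - 1) C (q - 1) (length C)"
    and dist: "distinct (realized_edges C (q - 1) (length C))"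
    using dfs unfolding explored_def by (auto simp: init_path_def)
  have parents: "parents_precede C" using parents_precede_init_path[OF pre follow] .
  have len: "q - 1 \<le> length C" using prefix_length_le[OF pre] by (simp add: init_path_def)
  have "node_label C (q - 1) = node_label (init_path T q \<phi>) (q - 1)"
    using node_label_prefix[OF pre] by (simp add: init_path_def)
  also have "\<dots> = Some (\<phi> (take (q - 1) T))"
    using node_label_init_path[OF q(1), of T \<phi>] unfolding substr_0_eq_take[OF q(1)] .
  finally have "node_label C (q - 1) = Some (\<phi> (take (q - 1) T))" .
  moreover have "take (q - 1) T \<in> grams T (q - 1)" using q by (simp add: grams_def)
  moreover have "take (q - 1) (w_str C (q - 1)) = rev (take (q - 1) T)"
    using w_str_init_path[OF pre parents] q by simp
  ultimately show ?thesis
    using shift inj parents follow dist len by unfold_locales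
qed

subsection \<open>The suffix tree\<close>

lemma ctrie_node_prefix_of_member:
  assumes "y \<in> ctrie_nodes S" "y \<noteq> []"
  shows "\<exists>s \<in> S. prefix y s"
  using assms unfolding ctrie_nodes_def by (auto dest: append_prefixD)

lemma ctrie_deep_node_is_leaf:
  assumes prefix_free: "\<And>s t. s \<in> S \<Longrightarrow> t \<in> S \<Longrightarrow> prefix s t \<Longrightarrow> s = t"
    and deep_unique: "\<And>s t x. s \<in> S \<Longrightarrow> t \<in> S \<Longrightarrow> q \<le> length x \<Longrightarrow> strict_prefix x s \<Longrightarrow>
      strict_prefix x t \<Longrightarrow> s = t"
    and "0 < q" and v: "v \<in> ctrie_nodes S" "q \<le> length v"
  shows "ctrie_leaf S v"
proof -
  have "\<not> (\<exists>a b. a \<noteq> b \<and> (\<exists>s\<in>S. prefix (v @ [a]) s) \<and> (\<exists>s\<in>S. prefix (v @ [b]) s))"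
  proof clarify
    fix a b s t assume "a \<noteq> b" "s \<in> S" "prefix (v @ [a]) s" "t \<in> S" "prefix (v @ [b]) t"
    moreover from this have "s = t" using deep_unique v(2) prefix_snocD by metis
    ultimately show False by (auto simp: prefix_def)
  qed
  moreover have "v \<noteq> []" using v \<open>0 < q\<close> by auto
  ultimately have "v \<in> S" using v(1) unfolding ctrie_nodes_def by blast
  moreover have False if y: "y \<in> ctrie_nodes S" "strict_prefix v y" for y
  proof -
    have "y \<noteq> []" using y(2) by auto
    then obtain s where s: "s \<in> S" "prefix y s" using ctrie_node_prefix_of_member y(1) by blast
    then have "prefix v s" using y(2) by (meson prefix_order.less_imp_le prefix_order.trans)
    then have "v = s" using prefix_free \<open>v \<in> S\<close> s(1) by blast
    then show False using prefix_length_less[OF y(2)] prefix_length_le[OF s(2)] by simp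
  qed
  ultimately show ?thesis using v(1) unfolding ctrie_leaf_def by blast
qed

lemma terminated_prefix_eq: "prefix (map Some w @ [None]) (map Some w' @ [None]) \<Longrightarrow> w = w'"
proof (induction w arbitrary: w')
  case Nil
  then show ?case by (cases w') auto
next
  case (Cons a w)
  show ?case
  proof (cases w')
    case Nil
    then show ?thesis using Cons.prems by simp
  next
    case (Cons b w'')
    then have "a = b" "prefix (map Some w @ [None]) (map Some w'' @ [None])"
      using Cons.prems by simp_all
    then show ?thesis using Cons.IH Cons by simp
  qed
qed

lemma suffix_strings_prefix_free:
  assumes "s \<in> suffix_strings C" "t \<in> suffix_strings C" "prefix s t"
  shows "s = t"
proof -
  obtain u v where st: "s = map Some (w_str C u) @ [None]" "t = map Some (w_str C v) @ [None]"
    using assms(1,2) unfolding suffix_strings_def by blast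
  then have "w_str C u = w_str C v" using assms(3) terminated_prefix_eq by metis
  then show ?thesis using st by simp
qed

lemma strict_prefix_terminated:
  assumes "strict_prefix x (map Some w @ [None])"
  shows "length x \<le> length w" "x = map Some (take (length x) w)"
proof -
  have "length x < Suc (length w)" using prefix_length_less[OF assms] by simp
  moreover have "x = take (length x) (map Some w @ [None])"
    using assms by (metis append_eq_conv_conj prefix_def strict_prefix_def)
  ultimately show "length x \<le> length w" "x = map Some (take (length x) w)"
    by (simp_all add: take_map)
qed

lemma suffix_strings_deep_unique:
  assumes deep: "\<And>u v. q \<le> u \<Longrightarrow> u \<le> length C \<Longrightarrow> q \<le> v \<Longrightarrow> v \<le> length C \<Longrightarrow>
      take q (w_str C u) = take q (w_str C v) \<Longrightarrow> u = v"
    and "s \<in> suffix_strings C" "t \<in> suffix_strings C" "q \<le> length x"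
    and "strict_prefix x s" "strict_prefix x t"
  shows "s = t"
proof -
  obtain u v where uv: "u \<le> length C" "s = map Some (w_str C u) @ [None]"
    "v \<le> length C" "t = map Some (w_str C v) @ [None]"
    using assms(2,3) unfolding suffix_strings_def by blast
  have "q \<le> length (w_str C u)" "q \<le> length (w_str C v)"
    using strict_prefix_terminated(1) assms(4-6) uv by fastforce+
  moreover have "take q x = map Some (take q (w_str C u))" "take q x = map Some (take q (w_str C v))"
    using strict_prefix_terminated(2) assms(4-6) uv by (metis min.absorb1 take_map take_take)+
  ultimately show ?thesis
    using deep[of u v] length_w_str[of C u] length_w_str[of C v] uv
    by (metis inj_map_eq_map inj_Some le_trans)
qed

theorem lemma9:
  fixes R :: "'a slp_rule list" and q :: nat and \<phi> :: "'a list \<Rightarrow> 'f"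
    and ord :: "nat list" and V :: "'f set" and C :: "('a,'f) cstree"
  assumes "q \<ge> 2"
    and "wf_slp R"
    and "length (slp_text R) \<ge> q"
    and "\<forall>i < length R. occ R i > 0"
    and "\<forall>x y. sublist x (slp_text R) \<longrightarrow> sublist y (slp_text R) \<longrightarrow>
               length x = q - 1 \<longrightarrow> length y = q - 1 \<longrightarrow> \<phi> x = \<phi> y \<longrightarrow> x = y"
    and "distinct ord" and "set ord = qual_rules R q"
    and "dfs (snd (build_graph R q \<phi> ord)) (\<phi> (substr (slp_text R) 0 (q - 2))) (q - 1)
           ({\<phi> (substr (slp_text R) 0 (q - 2))}, init_path (slp_text R) q \<phi>) (V, C)"
  shows "\<forall>v \<in> ctrie_nodes (suffix_strings C). sdepth v \<ge> q \<longrightarrow> ctrie_leaf (suffix_strings C) v"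
proof -
  define T E where "T = slp_text R" and "E = snd (build_graph R q \<phi> ord)"
  have "shift_edges T (q - 1) \<phi> E"
    using build_graph_shift_edges[OF assms(1,2,4,7)] unfolding T_def E_def .
  moreover have "inj_on \<phi> (grams T (q - 1))"
    using assms(5) unfolding T_def grams_def inj_on_def by blast
  moreover have "explored E (\<phi> (substr T 0 (q - 2))) (q - 1) UNIV
      {\<phi> (substr T 0 (q - 2))} (init_path T q \<phi>) V C"
    using node_label_init_path[OF assms(1), of "slp_text R" \<phi>] dfs_explored(1)[OF assms(8)]
    unfolding T_def E_def by simp
  ultimately interpret cs_tree T "q - 1" \<phi> E C "take (q - 1) T"
    using cs_tree_init_path assms(1,3) unfolding T_def by blast
  obtain n where n: "q = Suc n" using assms(1) by (cases q) auto
  have deep: "u = v" if "q \<le> u" "u \<le> length C" "q \<le> v" "v \<le> length C"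
    "take q (w_str C u) = take q (w_str C v)" for u v
    using deep_nodes_inj[of u v] that unfolding n by (simp add: Suc_le_eq)
  show ?thesis
    unfolding sdepth_def
  proof (intro ballI impI)
    fix v assume "v \<in> ctrie_nodes (suffix_strings C)" "q \<le> length v"
    with n show "ctrie_leaf (suffix_strings C) v"
      by (intro ctrie_deep_node_is_leaf[OF suffix_strings_prefix_free
          suffix_strings_deep_unique[OF deep]]) simp_all
  qed
qed

end
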